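(* Let $n\ge0$ and $i,j\in D$. Suppose that for $m=1,\dots,r$ we are given $a_m,b_m\in D$ with $\mathcal F_n(a_m)\subseteq\mathcal F_n(b_m)$, $A_i(a_m)=1$ and $A_j(b_m)=1$, and that $A_i(c)\le A_j(c)$ for all $c\notin\{a_m:m=1,\dots,r\}$. Then $\mathcal F_{n+1}(i)\subseteq\mathcal F_{n+1}(j)$.
   Context: Fix integers $k\ge1$, $d\ge1$, $K=\{1,\dots,k\}$, $D=\{1,\dots,d\}$. The $k$-tree is the set $K^*$ of finite words over $K$ with root the empty word $\epsilon$; $xg$ ($g\in K$) are the children of $x$. $L_n$ is the set of words of length exactly $n$ and $\Delta_n$ the set of words of length at most $n$. $A$ is a $d\times d$ matrix with entries in $\{0,1\}$, and $A_i(m)=A(i,m)$. A (valid) labeling of $\Delta_n$ is a map $\lambda:\Delta_n\to D$ with $A(\lambda(x),\lambda(xg))=1$ for all $x\in\Delta_{n-1}$, $g\in K$. The $n$-follower set of $a\in D$ is $\mathcal F_n(a)=\{\lambda|_{L_n}: \lambda \text{ a valid labeling of } \Delta_n \text{ with } \lambda(\epsilon)=a\}$. *)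

theory Defs
  imports Main "HOL-Library.FuncSet"
begin

text \<open>Alphabet K = {1..k}, label set D = {1..d}; words are lists over K,
  the children of x are x @ [g]; the root is the empty list.\<close>

definition words_len :: "nat \<Rightarrow> nat \<Rightarrow> nat list set"
  where "words_len k n = {x. length x = n \<and> set x \<subseteq> {1..k}}"

definition words_upto :: "nat \<Rightarrow> nat \<Rightarrow> nat list set"
  where "words_upto k n = {x. length x \<le> n \<and> set x \<subseteq> {1..k}}"

text \<open>A valid labeling of Delta_n (only its values on Delta_n matter).\<close>
definition valid_labeling ::
  "nat \<Rightarrow> nat \<Rightarrow> (nat \<Rightarrow> nat \<Rightarrow> nat) \<Rightarrow> nat \<Rightarrow> (nat list \<Rightarrow> nat) \<Rightarrow> bool"
  where "valid_labeling k d A n lam \<longleftrightarrow>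
     (\<forall>x \<in> words_upto k n. lam x \<in> {1..d}) \<and>
     (\<forall>x \<in> words_upto k n. length x < n \<longrightarrow>
        (\<forall>g \<in> {1..k}. A (lam x) (lam (x @ [g])) = 1))"

definition follower ::
  "nat \<Rightarrow> nat \<Rightarrow> (nat \<Rightarrow> nat \<Rightarrow> nat) \<Rightarrow> nat \<Rightarrow> nat \<Rightarrow> (nat list \<Rightarrow> nat) set"
  where "follower k d A n a =
     {restrict lam (words_len k n) | lam. valid_labeling k d A n lam \<and> lam [] = a}"

end

theory Submission
  imports Defs
begin

text \<open>A labeling of \<open>\<Delta>\<^sub>n\<^sub>+\<^sub>1\<close> with root label \<open>i\<close> is the same as, for each child \<open>g\<close>,
  a labeling of \<open>\<Delta>\<^sub>n\<close> rooted at some \<open>c\<close> with \<open>A i c = 1\<close>. Hence \<open>\<F>\<^sub>n\<^sub>+\<^sub>1(i) \<subseteq> \<F>\<^sub>n\<^sub>+\<^sub>1(j)\<close>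
  as soon as every \<open>\<F>\<^sub>n(c)\<close> with \<open>A i c = 1\<close> lies in some \<open>\<F>\<^sub>n(c')\<close> with \<open>A j c' = 1\<close>.
  Under the hypotheses of the theorem, \<open>c' = b\<^sub>m\<close> works for \<open>c = a\<^sub>m\<close> and \<open>c' = c\<close>
  works otherwise.\<close>

fun graft :: "nat \<Rightarrow> (nat \<Rightarrow> nat list \<Rightarrow> nat) \<Rightarrow> nat list \<Rightarrow> nat" where
  "graft c M [] = c"
| "graft c M (g # x) = M g x"

lemma valid_labeling_subtree:
  assumes "valid_labeling k d A (Suc n) lam" "g \<in> {1..k}"
  shows "valid_labeling k d A n (\<lambda>x. lam (g # x))"
proof -
  have "x \<in> words_upto k n \<Longrightarrow> g # x \<in> words_upto k (Suc n)" for x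
    using assms(2) by (auto simp: words_upto_def)
  then show ?thesis
    using assms(1) unfolding valid_labeling_def
    by (metis Cons_eq_appendI Suc_less_eq length_Cons)
qed

lemma valid_labeling_graft:
  assumes "c \<in> {1..d}"
    and "\<And>g. g \<in> {1..k} \<Longrightarrow> valid_labeling k d A n (M g) \<and> A c (M g []) = 1"
  shows "valid_labeling k d A (Suc n) (graft c M)"
  unfolding valid_labeling_def
proof (intro conjI ballI impI)
  fix w assume w: "w \<in> words_upto k (Suc n)"
  show "graft c M w \<in> {1..d}"
  proof (cases w)
    case (Cons g x)
    then have "g \<in> {1..k}" "x \<in> words_upto k n"
      using w by (auto simp: words_upto_def)
    then show ?thesis
      using assms(2) unfolding valid_labeling_def Cons by auto
  qed (use assms(1) in simp)
next
  fix w h assume w: "w \<in> words_upto k (Suc n)" and "length w < Suc n" and h: "h \<in> {1..k}"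
  show "A (graft c M w) (graft c M (w @ [h])) = 1"
  proof (cases w)
    case Nil
    then show ?thesis using assms(2)[OF h] by simp
  next
    case (Cons g x)
    then have "g \<in> {1..k}" "x \<in> words_upto k n" "length x < n"
      using w \<open>length w < Suc n\<close> by (auto simp: words_upto_def)
    then show ?thesis
      using assms(2) h unfolding valid_labeling_def Cons by auto
  qed
qed

lemma follower_Suc_subtree:
  assumes "f \<in> follower k d A (Suc n) i" "g \<in> {1..k}"
  shows "\<exists>c\<in>{1..d}. A i c = 1 \<and>
    restrict (\<lambda>x. f (g # x)) (words_len k n) \<in> follower k d A n c"
proof -
  obtain lam where lam: "valid_labeling k d A (Suc n) lam" "lam [] = i"
    and f: "f = restrict lam (words_len k (Suc n))"
    using assms(1) unfolding follower_def by auto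
  have "[] \<in> words_upto k (Suc n)" "[g] \<in> words_upto k (Suc n)"
    using assms(2) by (auto simp: words_upto_def)
  then have "lam [g] \<in> {1..d}" "A i (lam [g]) = 1"
    using lam assms(2) unfolding valid_labeling_def by fastforce+
  moreover have "restrict (\<lambda>x. f (g # x)) (words_len k n) =
      restrict (\<lambda>x. lam (g # x)) (words_len k n)"
    using assms(2) by (intro restrict_ext) (auto simp: f words_len_def)
  ultimately show ?thesis
    using valid_labeling_subtree[OF lam(1) assms(2)] unfolding follower_def by auto
qed

lemma follower_Suc_graft:
  assumes "j \<in> {1..d}" "f \<in> extensional (words_len k (Suc n))"
    and "\<And>g. g \<in> {1..k} \<Longrightarrow> \<exists>c\<in>{1..d}. A j c = 1 \<and>
      restrict (\<lambda>x. f (g # x)) (words_len k n) \<in> follower k d A n c"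
  shows "f \<in> follower k d A (Suc n) j"
proof -
  have subtrees: "\<forall>g\<in>{1..k}. \<exists>mu. valid_labeling k d A n mu \<and> A j (mu []) = 1 \<and>
      (\<forall>x\<in>words_len k n. mu x = f (g # x))"
  proof
    fix g assume "g \<in> {1..k}"
    then obtain c where "A j c = 1"
      and "restrict (\<lambda>x. f (g # x)) (words_len k n) \<in> follower k d A n c"
      using assms(3) by blast
    then obtain mu where "valid_labeling k d A n mu" "mu [] = c"
      and eq: "restrict (\<lambda>x. f (g # x)) (words_len k n) = restrict mu (words_len k n)"
      unfolding follower_def by auto
    moreover have "\<forall>x\<in>words_len k n. mu x = f (g # x)"
      using eq by (metis restrict_apply')
    ultimately show "\<exists>mu. valid_labeling k d A n mu \<and> A j (mu []) = 1 \<and>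
        (\<forall>x\<in>words_len k n. mu x = f (g # x))"
      using \<open>A j c = 1\<close> by blast
  qed
  obtain M where M: "\<forall>g\<in>{1..k}. valid_labeling k d A n (M g) \<and>
      A j (M g []) = 1 \<and> (\<forall>x\<in>words_len k n. M g x = f (g # x))"
    using bchoice[OF subtrees] by blast
  have valid: "valid_labeling k d A (Suc n) (graft j M)"
    using assms(1) M by (intro valid_labeling_graft) auto
  have "restrict (graft j M) (words_len k (Suc n)) = f"
  proof (rule extensionalityI[OF _ assms(2)])
    fix w assume w: "w \<in> words_len k (Suc n)"
    then obtain g x where "w = g # x" "g \<in> {1..k}" "x \<in> words_len k n"
      by (cases w) (auto simp: words_len_def)
    then show "restrict (graft j M) (words_len k (Suc n)) w = f w"
      using M w by simp
  qed simp
  with valid show ?thesis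
    unfolding follower_def by force
qed

lemma follower_Suc_mono:
  assumes "j \<in> {1..d}"
    and "\<And>c. c \<in> {1..d} \<Longrightarrow> A i c = 1 \<Longrightarrow>
      \<exists>c'\<in>{1..d}. A j c' = 1 \<and> follower k d A n c \<subseteq> follower k d A n c'"
  shows "follower k d A (Suc n) i \<subseteq> follower k d A (Suc n) j"
proof
  fix f assume f: "f \<in> follower k d A (Suc n) i"
  then have "f \<in> extensional (words_len k (Suc n))"
    unfolding follower_def by auto
  then show "f \<in> follower k d A (Suc n) j"
    using assms follower_Suc_subtree[OF f] by (intro follower_Suc_graft) blast+
qed

theorem proposition3p8:
  fixes k d n r i j :: nat and A :: "nat \<Rightarrow> nat \<Rightarrow> nat" and a b :: "nat \<Rightarrow> nat"
  assumes "k \<ge> 1" and "d \<ge> 1"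
    and "\<forall>x \<in> {1..d}. \<forall>y \<in> {1..d}. A x y \<in> {0, 1}"
    and "i \<in> {1..d}" and "j \<in> {1..d}"
    and "\<forall>m \<in> {1..r}. a m \<in> {1..d} \<and> b m \<in> {1..d}"
    and "\<forall>m \<in> {1..r}. follower k d A n (a m) \<subseteq> follower k d A n (b m)"
    and "\<forall>m \<in> {1..r}. A i (a m) = 1 \<and> A j (b m) = 1"
    and "\<forall>c \<in> {1..d}. c \<notin> a ` {1..r} \<longrightarrow> A i c \<le> A j c"
  shows "follower k d A (n + 1) i \<subseteq> follower k d A (n + 1) j"
proof -
  have "\<exists>c'\<in>{1..d}. A j c' = 1 \<and> follower k d A n c \<subseteq> follower k d A n c'"
    if c: "c \<in> {1..d}" "A i c = 1" for c
  proof (cases "c \<in> a ` {1..r}")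
    case True
    then obtain m where "m \<in> {1..r}" "c = a m" by blast
    with assms(6-8) have "b m \<in> {1..d}" "A j (b m) = 1"
      "follower k d A n c \<subseteq> follower k d A n (b m)"
      by simp_all
    then show ?thesis by blast
  next
    case False
    have "A j c \<in> {0, 1}" using assms(3,5) c(1) by blast
    moreover have "A i c \<le> A j c" using assms(9) c(1) False by blast
    ultimately have "A j c = 1" using c(2) by auto
    then show ?thesis using c(1) by blast
  qed
  then show ?thesis
    using follower_Suc_mono[OF assms(5)] by simp
qed

end
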